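(* (a) Let $M\subset\mathcal P(\Omega_1)$, $N\subset\mathcal P(\Omega_2)$ be submanifolds and $\varphi:M\to N$, $\psi:N\to M$ Markov maps with $\psi\circ\varphi=\mathrm{id}_M$. Let $p\in M$, $q\in N$ with $q=\varphi(p)$ and $p=\psi(q)$. Then $\psi^*_q:T_p^*(M)\to T^*_q(N)$ is an isometry for the Fisher co-metrics: $g_{M,p}(\alpha_p,\beta_p)=g_{N,q}(\psi^*_q\alpha_p,\psi^*_q\beta_p)$ for all $\alpha_p,\beta_p\in T^*_p(M)$. (b) For every Markov co-embedding $\Psi:\mathcal P(\Omega_2)\to\mathcal P(\Omega_1)$, every $q\in\mathcal P(\Omega_2)$ (not only $q$ in the image of a given embedding) and all $\alpha,\beta\in T^*_{\Psi(q)}(\mathcal P(\Omega_1))$: $g_{\Psi(q)}(\alpha,\beta)=g_q(\Psi^*_q\alpha,\Psi_q^*\beta)$.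
   Context: For a finite set $\Omega$, $\mathcal P(\Omega)$ is the manifold of strictly positive probability distributions. A Markov map $\mathcal P(\Omega_1)\to\mathcal P(\Omega_2)$ is a map $p\mapsto\sum_xW(\cdot|x)p(x)$ for a surjective channel $W$ (equivalently an affine map between these sets); a Markov map between submanifolds $M\to N$ is the restriction of such a map. A Markov map $\Phi:\mathcal P(\Omega_1)\to\mathcal P(\Omega_2)$ is a Markov embedding if some Markov map $\Psi:\mathcal P(\Omega_2)\to\mathcal P(\Omega_1)$ satisfies $\Psi\circ\Phi=\mathrm{id}$; such $\Psi$ is called a Markov co-embedding. $\psi^*_q$ denotes the transpose of $(d\psi)_q:T_q(N)\to T_p(M)$. The Fisher metric is $g_p(X,Y)=\sum_\omega X^{(m)}(\omega)Y^{(m)}(\omega)/p(\omega)$ (m-representations); $g_M,g_N$ are its restrictions to $M,N$, and the same symbols denote the dual inner products (Fisher co-metrics) on cotangent spaces. On $\mathcal P(\Omega)$ the Fisher co-metric satisfies $g_p((d\langle A\rangle)_p,(d\langle B\rangle)_p)=\mathrm{Cov}_p(A,B)$. *)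

theory Defs
  imports "HOL-Analysis.Analysis"
begin

text \<open>A finite sample space Omega is a finite type; distributions and tangent
vectors (m-representation) are vectors in real^Omega.\<close>

definition PD :: "(real^'n) set" where
  "PD = {p. (\<forall>i. 0 < p $ i) \<and> (\<Sum>i\<in>UNIV. p $ i) = 1}"

text \<open>Surjective channel W(y|x) = W \$ y \$ x from Omega_1 ('n) to Omega_2 ('m):
stochastic columns, and every output has positive probability for some input.\<close>
definition surj_channel :: "real^'n^'m \<Rightarrow> bool" where
  "surj_channel W \<longleftrightarrow> (\<forall>y x. 0 \<le> W $ y $ x) \<and> (\<forall>x. (\<Sum>y\<in>UNIV. W $ y $ x) = 1)
     \<and> (\<forall>y. \<exists>x. 0 < W $ y $ x)"

text \<open>The Markov map of W is p |-> W *v p; being linear, its differential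
(in m-representation) is X |-> W *v X.\<close>
definition markov_map :: "real^'n^'m \<Rightarrow> real^'n \<Rightarrow> real^'m" where
  "markov_map W p = W *v p"

definition markov_co_embedding :: "real^'m^'n \<Rightarrow> bool" where
  "markov_co_embedding V \<longleftrightarrow> surj_channel V \<and>
     (\<exists>W :: real^'n^'m. surj_channel W \<and> (\<forall>p\<in>PD. markov_map V (markov_map W p) = p))"

definition C1_on :: "(real^'n \<Rightarrow> real^'n) \<Rightarrow> (real^'n) set \<Rightarrow> bool" where
  "C1_on h U \<longleftrightarrow> (\<exists>h'. (\<forall>x\<in>U. (h has_derivative blinfun_apply (h' x)) (at x)) \<and> continuous_on U h')"

definition submanifold :: "(real^'n) set \<Rightarrow> bool" where
  "submanifold M \<longleftrightarrow> M \<subseteq> PD \<and>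
    (\<forall>p\<in>M. \<exists>U V h k S. open U \<and> p \<in> U \<and> open V \<and> homeomorphism U V h k \<and>
        C1_on h U \<and> C1_on k V \<and> subspace S \<and> h ` (M \<inter> U) = S \<inter> V)"

definition tangent_space :: "(real^'n) set \<Rightarrow> real^'n \<Rightarrow> (real^'n) set" where
  "tangent_space M p = {v. \<exists>\<gamma>. \<gamma> 0 = p \<and> (\<exists>e>0. \<forall>t. \<bar>t\<bar> < e \<longrightarrow> \<gamma> t \<in> M)
       \<and> (\<gamma> has_vector_derivative v) (at 0)}"

definition cotangent_space :: "(real^'n) set \<Rightarrow> real^'n \<Rightarrow> (real^'n \<Rightarrow> real) set" where
  "cotangent_space M p = {\<alpha>. \<forall>X\<in>tangent_space M p. \<forall>Y\<in>tangent_space M p. \<forall>a b.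
       \<alpha> (a *\<^sub>R X + b *\<^sub>R Y) = a * \<alpha> X + b * \<alpha> Y}"

definition fisher :: "real^'n \<Rightarrow> real^'n \<Rightarrow> real^'n \<Rightarrow> real" where
  "fisher p X Y = (\<Sum>w\<in>UNIV. X $ w * Y $ w / p $ w)"

definition sharp :: "(real^'n) set \<Rightarrow> real^'n \<Rightarrow> (real^'n \<Rightarrow> real) \<Rightarrow> real^'n" where
  "sharp M p \<alpha> = (THE X. X \<in> tangent_space M p \<and> (\<forall>Y\<in>tangent_space M p. fisher p X Y = \<alpha> Y))"

definition cometric :: "(real^'n) set \<Rightarrow> real^'n \<Rightarrow> (real^'n \<Rightarrow> real) \<Rightarrow> (real^'n \<Rightarrow> real) \<Rightarrow> real" where
  "cometric M p \<alpha> \<beta> = fisher p (sharp M p \<alpha>) (sharp M p \<beta>)"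

text \<open>Transpose of the differential of the Markov map of V: alpha |-> alpha o (V *v _).\<close>
definition pullback :: "real^'m^'n \<Rightarrow> (real^'n \<Rightarrow> real) \<Rightarrow> (real^'m \<Rightarrow> real)" where
  "pullback V \<alpha> = (\<lambda>Y. \<alpha> (V *v Y))"

end

theory Submission
  imports Defs
begin

text \<open>Markov maps contract the Fisher metric (a weighted Cauchy--Schwarz inequality). Let
  \<open>A : T' \<rightarrow> T\<close> and \<open>B : T \<rightarrow> T'\<close> be contractions between subspaces with \<open>A B = id\<close>. Then \<open>B\<close> is an
  isometry, and minimality of the Fisher norm along \<open>B X + ker A\<close> makes \<open>B\<close> adjoint to \<open>A\<close>. Hence
  the Fisher dual of \<open>\<alpha> \<circ> A\<close> is \<open>B\<close> applied to the dual of \<open>\<alpha>\<close>, and the co-metric is preserved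
  by pullback along \<open>A\<close>. In (a) the differentials of \<open>\<psi>\<close> and \<open>\<phi>\<close> play the roles of \<open>A\<close>
  and \<open>B\<close>. In (b) no embedding through \<open>q\<close> is given, but a co-embedding \<open>\<Psi>\<close> is a deterministic
  merging of outcomes, so its Bayes inverse with prior \<open>q\<close> is a right inverse sending \<open>\<Psi>(q)\<close>
  back to \<open>q\<close>.\<close>

section \<open>Monotonicity of the Fisher metric\<close>

lemma fisher_sym: "fisher p X Y = fisher p Y X"
  unfolding fisher_def by (simp add: mult.commute)

lemma fisher_add_left: "fisher p (X + Z) Y = fisher p X Y + fisher p Z Y"
  unfolding fisher_def by (simp add: sum.distrib[symmetric] algebra_simps add_divide_distrib)

lemma fisher_add_right: "fisher p Y (X + Z) = fisher p Y X + fisher p Y Z"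
  by (metis fisher_add_left fisher_sym)

lemma fisher_scaleR_left: "fisher p (c *\<^sub>R X) Y = c * fisher p X Y"
  unfolding fisher_def by (simp add: sum_distrib_left algebra_simps)

lemma fisher_scaleR_right: "fisher p Y (c *\<^sub>R X) = c * fisher p Y X"
  by (metis fisher_scaleR_left fisher_sym)

lemma fisher_diff_left: "fisher p (X - Z) Y = fisher p X Y - fisher p Z Y"
  using fisher_add_left[of p "X - Z" Z Y] by simp

lemma fisher_self_nonneg:
  assumes "\<forall>i. 0 < p $ i"
  shows "0 \<le> fisher p X X"
  unfolding fisher_def using assms by (intro sum_nonneg) (simp add: less_imp_le)

lemma fisher_self_eq_0D:
  assumes "\<forall>i. 0 < p $ i" and "fisher p X X = 0"
  shows "X = 0"
proof -
  have "\<forall>i\<in>UNIV. X $ i * X $ i / p $ i = 0"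
    using assms unfolding fisher_def
    by (subst sum_nonneg_eq_0_iff[symmetric]) (auto simp: less_imp_le)
  then show ?thesis
    using assms(1) by (auto simp: vec_eq_iff) (metis less_irrefl)
qed

definition column_stochastic :: "real^'n^'m \<Rightarrow> bool" where
  "column_stochastic W \<longleftrightarrow> (\<forall>y x. 0 \<le> W $ y $ x) \<and> (\<forall>x. (\<Sum>y\<in>UNIV. W $ y $ x) = 1)"

lemma surj_channel_column_stochastic: "surj_channel W \<Longrightarrow> column_stochastic W"
  unfolding surj_channel_def column_stochastic_def by blast

lemma sum_stochastic_matrix_vector_mult:
  assumes "column_stochastic W"
  shows "(\<Sum>y\<in>UNIV. (W *v X) $ y) = (\<Sum>x\<in>UNIV. X $ x)"
proof -
  have "(\<Sum>y\<in>UNIV. (W *v X) $ y) = (\<Sum>x\<in>UNIV. (\<Sum>y\<in>UNIV. W $ y $ x) * X $ x)"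
    by (simp add: matrix_vector_mult_def sum_distrib_right) (rule sum.swap)
  then show ?thesis
    using assms unfolding column_stochastic_def by simp
qed

lemma weighted_Cauchy_Schwarz:
  fixes w p X :: "'a \<Rightarrow> real"
  assumes "\<forall>x\<in>A. 0 \<le> w x" and "\<forall>x\<in>A. 0 < p x"
  shows "(\<Sum>x\<in>A. w x * X x)\<^sup>2 \<le> (\<Sum>x\<in>A. w x * X x ^ 2 / p x) * (\<Sum>x\<in>A. w x * p x)"
proof -
  have "(\<Sum>x\<in>A. w x * X x) = (\<Sum>x\<in>A. (X x * sqrt (w x / p x)) * sqrt (w x * p x))"
  proof (intro sum.cong refl)
    fix x assume "x \<in> A"
    then have "0 \<le> w x" "0 < p x" using assms by auto
    then have "sqrt (w x / p x) * sqrt (w x * p x) = w x"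
      by (simp add: real_sqrt_mult[symmetric])
    then show "w x * X x = X x * sqrt (w x / p x) * sqrt (w x * p x)"
      by (simp add: mult.assoc)
  qed
  also have "\<dots>\<^sup>2 \<le> (\<Sum>x\<in>A. (X x * sqrt (w x / p x))\<^sup>2) * (\<Sum>x\<in>A. (sqrt (w x * p x))\<^sup>2)"
    by (rule Cauchy_Schwarz_ineq_sum)
  also have "\<dots> = (\<Sum>x\<in>A. w x * X x ^ 2 / p x) * (\<Sum>x\<in>A. w x * p x)"
  proof (intro arg_cong2[where f = "(*)"] sum.cong refl)
    fix x assume "x \<in> A"
    then have "0 \<le> w x" "0 < p x" using assms by auto
    then show "(X x * sqrt (w x / p x))\<^sup>2 = w x * X x ^ 2 / p x" and "(sqrt (w x * p x))\<^sup>2 = w x * p x"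
      by (simp_all add: power_mult_distrib)
  qed
  finally show ?thesis .
qed

lemma fisher_stochastic_contraction:
  assumes W: "column_stochastic W" and p: "\<forall>x. 0 < p $ x"
  shows "fisher (W *v p) (W *v X) (W *v X) \<le> fisher p X X"
proof -
  have Wnn: "\<forall>y x. 0 \<le> W $ y $ x" and Wsum: "\<forall>x. (\<Sum>y\<in>UNIV. W $ y $ x) = 1"
    using W unfolding column_stochastic_def by auto
  have "(W *v X) $ y * (W *v X) $ y / (W *v p) $ y \<le> (\<Sum>x\<in>UNIV. W $ y $ x * X $ x ^ 2 / p $ x)"
    for y
  proof (cases "(W *v p) $ y = 0")
    case True
    then show ?thesis using Wnn p by (simp add: sum_nonneg less_imp_le)
  next
    case False
    moreover have "0 \<le> (W *v p) $ y"
      using Wnn p by (auto intro!: sum_nonneg simp: matrix_vector_mult_def less_imp_le)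
    moreover have "((W *v X) $ y)\<^sup>2 \<le> (\<Sum>x\<in>UNIV. W $ y $ x * X $ x ^ 2 / p $ x) * (W *v p) $ y"
      using weighted_Cauchy_Schwarz[of UNIV "\<lambda>x. W $ y $ x" "\<lambda>x. p $ x" "\<lambda>x. X $ x"] Wnn p
      by (simp add: matrix_vector_mult_def)
    ultimately show ?thesis by (simp add: divide_le_eq power2_eq_square)
  qed
  then have "fisher (W *v p) (W *v X) (W *v X) \<le> (\<Sum>y\<in>UNIV. \<Sum>x\<in>UNIV. W $ y $ x * X $ x ^ 2 / p $ x)"
    unfolding fisher_def by (rule sum_mono)
  also have "\<dots> = (\<Sum>x\<in>UNIV. (\<Sum>y\<in>UNIV. W $ y $ x) * (X $ x ^ 2 / p $ x))"
    by (subst sum.swap) (simp add: sum_distrib_right sum_divide_distrib)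
  also have "\<dots> = fisher p X X"
    using Wsum unfolding fisher_def by (simp add: power2_eq_square)
  finally show ?thesis .
qed

section \<open>Fisher duality on a subspace\<close>

definition linear_on :: "(real^'n) set \<Rightarrow> (real^'n \<Rightarrow> real) \<Rightarrow> bool" where
  "linear_on T \<alpha> \<longleftrightarrow> (\<forall>X\<in>T. \<forall>Y\<in>T. \<forall>a b. \<alpha> (a *\<^sub>R X + b *\<^sub>R Y) = a * \<alpha> X + b * \<alpha> Y)"

definition fisher_sharp :: "(real^'n) set \<Rightarrow> real^'n \<Rightarrow> (real^'n \<Rightarrow> real) \<Rightarrow> real^'n" where
  "fisher_sharp T p \<alpha> = (THE X. X \<in> T \<and> (\<forall>Y\<in>T. fisher p X Y = \<alpha> Y))"

lemma cotangent_space_eq: "cotangent_space M p = {\<alpha>. linear_on (tangent_space M p) \<alpha>}"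
  unfolding cotangent_space_def linear_on_def ..

lemma cometric_eq_fisher_sharp:
  "cometric M p \<alpha> \<beta> =
     fisher p (fisher_sharp (tangent_space M p) p \<alpha>) (fisher_sharp (tangent_space M p) p \<beta>)"
  unfolding cometric_def sharp_def fisher_sharp_def ..

lemma linear_on_sum:
  assumes "subspace T" "linear_on T \<alpha>" "finite F" "\<forall>i\<in>F. f i \<in> T"
  shows "\<alpha> (\<Sum>i\<in>F. c i *\<^sub>R f i) = (\<Sum>i\<in>F. c i * \<alpha> (f i))"
  using assms(3,4)
proof (induction F rule: finite_induct)
  case empty
  have "\<alpha> (0 *\<^sub>R 0 + 0 *\<^sub>R 0) = 0 * \<alpha> 0 + 0 * \<alpha> 0"
    using assms(1,2) unfolding linear_on_def by (meson subspace_0)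
  then show ?case by simp
next
  case (insert x F)
  have "(\<Sum>i\<in>F. c i *\<^sub>R f i) \<in> T"
    using insert assms(1) by (intro subspace_sum) (auto intro: subspace_scale)
  then have "\<alpha> (c x *\<^sub>R f x + 1 *\<^sub>R (\<Sum>i\<in>F. c i *\<^sub>R f i)) = c x * \<alpha> (f x) + 1 * \<alpha> (\<Sum>i\<in>F. c i *\<^sub>R f i)"
    using assms(2) insert.prems unfolding linear_on_def by blast
  then show ?case using insert by simp
qed

lemma fisher_sharp_unique:
  assumes "subspace T" "\<forall>i. 0 < p $ i" "X \<in> T" "\<forall>Y\<in>T. fisher p X Y = \<alpha> Y"
  shows "fisher_sharp T p \<alpha> = X"
  unfolding fisher_sharp_def
proof (rule the_equality)
  show "X \<in> T \<and> (\<forall>Y\<in>T. fisher p X Y = \<alpha> Y)" using assms by blast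
  fix X' assume X': "X' \<in> T \<and> (\<forall>Y\<in>T. fisher p X' Y = \<alpha> Y)"
  then have "X' - X \<in> T" using assms by (simp add: subspace_diff)
  then have "fisher p (X' - X) (X' - X) = 0"
    using X' assms by (simp add: fisher_diff_left)
  then show "X' = X" using fisher_self_eq_0D assms(2) by fastforce
qed

text \<open>Dividing coordinates by \<open>sqrt p\<close> turns the Fisher metric
  into the Euclidean inner product, and an orthonormal basis of the image of \<open>T\<close> gives the
  representative.\<close>

lemma fisher_riesz:
  fixes T :: "(real^'n) set"
  assumes T: "subspace T" and p: "\<forall>i. 0 < p $ i" and \<alpha>: "linear_on T \<alpha>"
  shows "\<exists>X\<in>T. \<forall>Y\<in>T. fisher p X Y = \<alpha> Y"
proof -
  define D where "D = (\<lambda>X::real^'n. \<chi> i. X $ i / sqrt (p $ i))"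
  define D' where "D' = (\<lambda>X::real^'n. \<chi> i. X $ i * sqrt (p $ i))"
  have "linear D" unfolding D_def by (auto simp: linear_iff vec_eq_iff add_divide_distrib)
  have "linear D'" unfolding D'_def by (auto simp: linear_iff vec_eq_iff algebra_simps)
  have D'_D: "D' (D X) = X" for X
    unfolding D_def D'_def using p by (simp add: vec_eq_iff) (metis less_irrefl real_sqrt_eq_zero_cancel_iff)
  have fisher_D: "fisher p X Y = D X \<bullet> D Y" for X Y
    unfolding fisher_def D_def inner_vec_def
  proof (intro sum.cong refl)
    fix i
    have "sqrt (p $ i) * sqrt (p $ i) = p $ i" using p by (simp add: less_imp_le)
    then show "X $ i * Y $ i / p $ i = (\<chi> i. X $ i / sqrt (p $ i)) $ i \<bullet> (\<chi> i. Y $ i / sqrt (p $ i)) $ i"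
      by (metis inner_real_def times_divide_times_eq vec_lambda_beta)
  qed
  have "subspace (D ` T)" using \<open>linear D\<close> T by (rule linear_subspace_image)
  then obtain B where B: "B \<subseteq> D ` T" "pairwise orthogonal B" "\<And>x. x \<in> B \<Longrightarrow> norm x = 1"
    "independent B" "span B = D ` T"
    using orthonormal_basis_subspace by metis
  have "finite B" using B(4) by (rule finiteI_independent)
  have D'_B: "D' b \<in> T" if "b \<in> B" for b
    using that B(1) D'_D by auto
  define X' where "X' = (\<Sum>b\<in>B. \<alpha> (D' b) *\<^sub>R b)"
  have "X' \<in> D ` T" unfolding X'_def using B(5)[symmetric]
    by (simp add: span_sum span_mul span_base)
  then obtain X where X: "X \<in> T" "X' = D X" by auto
  have "fisher p X Y = \<alpha> Y" if Y: "Y \<in> T" for Y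
  proof -
    have "D Y \<in> span B" using Y B(5) by auto
    then have expand: "(\<Sum>b\<in>B. (D Y \<bullet> b) *\<^sub>R b) = D Y"
      using orthonormal_basis_expand[OF B(2) B(3) _ \<open>finite B\<close>] by blast
    have "\<alpha> Y = \<alpha> (D' (D Y))" using D'_D by simp
    also have "\<dots> = \<alpha> (\<Sum>b\<in>B. (D Y \<bullet> b) *\<^sub>R D' b)"
      by (subst expand[symmetric]) (simp add: linear_sum[OF \<open>linear D'\<close>] linear_scale[OF \<open>linear D'\<close>])
    also have "\<dots> = (\<Sum>b\<in>B. (D Y \<bullet> b) * \<alpha> (D' b))"
      using linear_on_sum[OF T \<alpha> \<open>finite B\<close>, of D'] D'_B by blast
    also have "\<dots> = X' \<bullet> D Y" unfolding X'_def
      by (simp add: inner_sum_left inner_commute[of _ "D Y"] inner_sum_right mult.commute)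
    also have "\<dots> = fisher p X Y" using X fisher_D by simp
    finally show ?thesis by simp
  qed
  then show ?thesis using X(1) by blast
qed

lemma fisher_sharp:
  assumes "subspace T" "\<forall>i. 0 < p $ i" "linear_on T \<alpha>"
  shows "fisher_sharp T p \<alpha> \<in> T" and "\<forall>Y\<in>T. fisher p (fisher_sharp T p \<alpha>) Y = \<alpha> Y"
  using fisher_riesz[OF assms] fisher_sharp_unique[OF assms(1,2)] by metis+

section \<open>Contractive retractions\<close>

lemma quadratic_nonneg_imp_linear_coeff_0:
  fixes c d :: real
  assumes "0 \<le> d" and "\<forall>t. 0 \<le> 2 * t * c + t\<^sup>2 * d"
  shows "c = 0"
proof (rule ccontr)
  assume "c \<noteq> 0"
  define t where "t = - c / (d + 1)"
  have t: "(d + 1) * t = - c" unfolding t_def using assms(1) by simp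
  have "(d + 1)\<^sup>2 * (2 * t * c + t\<^sup>2 * d) = 2 * c * (d + 1) * ((d + 1) * t) + ((d + 1) * t)\<^sup>2 * d"
    by (simp add: power2_eq_square algebra_simps)
  also have "\<dots> = - c\<^sup>2 * (d + 2)" unfolding t by (simp add: power2_eq_square algebra_simps)
  finally have "(d + 1)\<^sup>2 * (2 * t * c + t\<^sup>2 * d) = - c\<^sup>2 * (d + 2)" .
  moreover have "0 < c\<^sup>2 * (d + 2)" using \<open>c \<noteq> 0\<close> assms(1) by simp
  moreover have "0 \<le> (d + 1)\<^sup>2 * (2 * t * c + t\<^sup>2 * d)" using assms(2) by simp
  ultimately show False by linarith
qed

locale fisher_retraction =
  fixes T :: "(real^'n) set" and T' :: "(real^'m) set"
    and p :: "real^'n" and q :: "real^'m"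
    and A :: "real^'m^'n" and B :: "real^'n^'m"
  assumes subspace_T: "subspace T" and subspace_T': "subspace T'"
    and p_pos: "\<forall>i. 0 < p $ i" and q_pos: "\<forall>i. 0 < q $ i"
    and A_maps: "\<And>Y. Y \<in> T' \<Longrightarrow> A *v Y \<in> T"
    and B_maps: "\<And>X. X \<in> T \<Longrightarrow> B *v X \<in> T'"
    and A_B: "\<And>X. X \<in> T \<Longrightarrow> A *v (B *v X) = X"
    and A_contraction: "\<And>Y. Y \<in> T' \<Longrightarrow> fisher p (A *v Y) (A *v Y) \<le> fisher q Y Y"
    and B_contraction: "\<And>X. X \<in> T \<Longrightarrow> fisher q (B *v X) (B *v X) \<le> fisher p X X"
begin

lemma B_isometric_self:
  assumes "X \<in> T"
  shows "fisher q (B *v X) (B *v X) = fisher p X X"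
  using A_contraction[OF B_maps[OF assms]] B_contraction[OF assms] A_B[OF assms] by simp

lemma B_isometric:
  assumes "X \<in> T" "X' \<in> T"
  shows "fisher q (B *v X) (B *v X') = fisher p X X'"
proof -
  have "X + X' \<in> T" using assms subspace_T by (simp add: subspace_add)
  from B_isometric_self[OF this]
  have "fisher q (B *v X + B *v X') (B *v X + B *v X') = fisher p (X + X') (X + X')"
    by (simp add: matrix_vector_right_distrib)
  then show ?thesis
    using B_isometric_self[OF assms(1)] B_isometric_self[OF assms(2)]
      fisher_sym[of q "B *v X'" "B *v X"] fisher_sym[of p X' X]
    by (simp add: fisher_add_left fisher_add_right)
qed

text \<open>The image of \<open>B\<close> is Fisher-orthogonal to the kernel of \<open>A\<close>: moving \<open>B X\<close> along a
  kernel direction \<open>w\<close> leaves \<open>A\<close> of it fixed, so by contractivity of \<open>A\<close> the quadratic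
  \<open>t \<mapsto> fisher q (B X + t w) (B X + t w)\<close> is minimal at \<open>t = 0\<close>.\<close>

lemma B_adjoint:
  assumes X: "X \<in> T" and Y: "Y \<in> T'"
  shows "fisher q (B *v X) Y = fisher p X (A *v Y)"
proof -
  define u where "u = B *v X"
  define w where "w = Y - B *v (A *v Y)"
  have "u \<in> T'" unfolding u_def using B_maps X .
  have "w \<in> T'" unfolding w_def using subspace_T' Y B_maps A_maps by (simp add: subspace_diff)
  have "A *v w = 0" unfolding w_def using A_B A_maps Y by (simp add: matrix_vector_mult_diff_distrib)
  have "0 \<le> 2 * t * fisher q u w + t\<^sup>2 * fisher q w w" for t
  proof -
    have "u + t *\<^sub>R w \<in> T'"
      using \<open>u \<in> T'\<close> \<open>w \<in> T'\<close> subspace_T' by (simp add: subspace_add subspace_scale)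
    moreover have "A *v (u + t *\<^sub>R w) = X"
      unfolding u_def using \<open>A *v w = 0\<close> A_B X
      by (simp add: matrix_vector_right_distrib matrix_vector_mult_scaleR)
    ultimately have "fisher p X X \<le> fisher q (u + t *\<^sub>R w) (u + t *\<^sub>R w)"
      using A_contraction by metis
    moreover have "fisher q (u + t *\<^sub>R w) (u + t *\<^sub>R w) =
        fisher q u u + 2 * t * fisher q u w + t\<^sup>2 * fisher q w w"
      using fisher_sym[of q w u]
      by (simp add: fisher_add_left fisher_add_right fisher_scaleR_left fisher_scaleR_right
          power2_eq_square algebra_simps)
    moreover have "fisher q u u = fisher p X X" unfolding u_def using B_isometric_self X .
    ultimately show ?thesis by simp
  qed
  then have "fisher q u w = 0"
    using quadratic_nonneg_imp_linear_coeff_0 fisher_self_nonneg[OF q_pos] by blast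
  then have "fisher q u Y = fisher q u (B *v (A *v Y))"
    using fisher_add_right[of q u "B *v (A *v Y)" w] unfolding w_def by simp
  also have "\<dots> = fisher p X (A *v Y)" unfolding u_def using B_isometric X A_maps Y by blast
  finally show ?thesis unfolding u_def .
qed

lemma fisher_sharp_pullback:
  assumes "linear_on T \<alpha>"
  shows "fisher_sharp T' q (\<lambda>Y. \<alpha> (A *v Y)) = B *v fisher_sharp T p \<alpha>"
proof (rule fisher_sharp_unique[OF subspace_T' q_pos])
  show "B *v fisher_sharp T p \<alpha> \<in> T'"
    using B_maps fisher_sharp(1)[OF subspace_T p_pos assms] .
  show "\<forall>Y\<in>T'. fisher q (B *v fisher_sharp T p \<alpha>) Y = \<alpha> (A *v Y)"
    using fisher_sharp[OF subspace_T p_pos assms] B_adjoint A_maps by simp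
qed

lemma fisher_sharp_pullback_isometric:
  assumes "linear_on T \<alpha>" and "linear_on T \<beta>"
  shows "fisher q (fisher_sharp T' q (\<lambda>Y. \<alpha> (A *v Y))) (fisher_sharp T' q (\<lambda>Y. \<beta> (A *v Y))) =
         fisher p (fisher_sharp T p \<alpha>) (fisher_sharp T p \<beta>)"
  unfolding fisher_sharp_pullback[OF assms(1)] fisher_sharp_pullback[OF assms(2)]
  using B_isometric fisher_sharp(1)[OF subspace_T p_pos] assms by blast

end

section \<open>Tangent spaces\<close>

lemma has_vector_derivative_imp_difference_quotient:
  fixes f :: "real \<Rightarrow> 'a::real_normed_vector"
  assumes "(f has_vector_derivative d) (at 0)"
  shows "((\<lambda>t. (f t - f 0) /\<^sub>R t) \<longlongrightarrow> d) (at 0)"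
proof -
  have "((\<lambda>t. norm (f t - f 0 - t *\<^sub>R d) / norm t) \<longlongrightarrow> 0) (at 0)"
    using assms unfolding has_vector_derivative_def has_derivative_iff_norm by simp
  moreover have "\<forall>\<^sub>F t in at 0. norm (f t - f 0 - t *\<^sub>R d) / norm t = norm ((f t - f 0) /\<^sub>R t - d)"
    unfolding eventually_at_filter
  proof (intro always_eventually allI impI)
    fix t :: real assume "t \<noteq> 0"
    then have "(f t - f 0) /\<^sub>R t - d = (f t - f 0 - t *\<^sub>R d) /\<^sub>R t"
      by (simp add: scaleR_diff_right)
    then show "norm (f t - f 0 - t *\<^sub>R d) / norm t = norm ((f t - f 0) /\<^sub>R t - d)"
      by (simp add: divide_inverse_commute)
  qed
  ultimately have "((\<lambda>t. norm ((f t - f 0) /\<^sub>R t - d)) \<longlongrightarrow> 0) (at 0)"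
    by (rule Lim_transform_eventually)
  then show ?thesis
    by (simp add: tendsto_norm_zero_iff LIM_zero_iff)
qed

lemma tangent_spaceE:
  assumes "v \<in> tangent_space M p"
  obtains \<gamma> e where "\<gamma> 0 = p" "0 < e" "\<forall>t. \<bar>t\<bar> < e \<longrightarrow> \<gamma> t \<in> M"
    "(\<gamma> has_vector_derivative v) (at 0)"
  using assms unfolding tangent_space_def by blast

lemma tangent_spaceI:
  assumes "\<gamma> 0 = p" "0 < e" "\<forall>t. \<bar>t\<bar> < e \<longrightarrow> \<gamma> t \<in> M"
    "(\<gamma> has_vector_derivative v) (at 0)"
  shows "v \<in> tangent_space M p"
  using assms unfolding tangent_space_def by blast

lemma has_vector_derivative_matrix_vector_mult:
  fixes A :: "real^'n^'m"
  shows "(\<gamma> has_vector_derivative v) F \<Longrightarrow> ((\<lambda>t. A *v \<gamma> t) has_vector_derivative A *v v) F"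
  by (rule bounded_linear.has_vector_derivative[OF matrix_vector_mul_bounded_linear])

lemma tangent_space_matrix_image:
  assumes "v \<in> tangent_space M p" "(\<lambda>x. A *v x) ` M \<subseteq> N"
  shows "A *v v \<in> tangent_space N (A *v p)"
proof -
  obtain \<gamma> e where "\<gamma> 0 = p" "0 < e" "\<forall>t. \<bar>t\<bar> < e \<longrightarrow> \<gamma> t \<in> M"
    "(\<gamma> has_vector_derivative v) (at 0)"
    using assms(1) by (rule tangent_spaceE)
  then show ?thesis
    using assms(2) by (intro tangent_spaceI[of "\<lambda>t. A *v \<gamma> t" _ e])
      (auto intro: has_vector_derivative_matrix_vector_mult)
qed

lemma tangent_space_left_inverse:
  assumes "v \<in> tangent_space M p" "\<forall>x\<in>M. B *v (A *v x) = x"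
  shows "B *v (A *v v) = v"
proof -
  obtain \<gamma> e where \<gamma>: "\<gamma> 0 = p" "0 < e" "\<forall>t. \<bar>t\<bar> < e \<longrightarrow> \<gamma> t \<in> M"
    "(\<gamma> has_vector_derivative v) (at 0)"
    using assms(1) by (rule tangent_spaceE)
  have "((\<lambda>t. B *v (A *v \<gamma> t)) has_vector_derivative B *v (A *v v)) (at 0)"
    by (intro has_vector_derivative_matrix_vector_mult \<gamma>(4))
  then have "(\<gamma> has_vector_derivative B *v (A *v v)) (at 0)"
    by (rule has_vector_derivative_transform_within_open[OF _ open_ball[of 0 e]])
      (use \<gamma>(2,3) assms(2) in \<open>auto simp: dist_real_def\<close>)
  then show ?thesis using \<gamma>(4) by (rule vector_derivative_unique_at)
qed

lemma tangent_space_PD: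
  fixes p :: "real^'n"
  assumes "p \<in> PD"
  shows "tangent_space PD p = {v. (\<Sum>i\<in>UNIV. v $ i) = 0}"
proof (intro set_eqI iffI)
  fix v assume "v \<in> tangent_space PD p"
  then obtain \<gamma> e where \<gamma>: "\<gamma> 0 = p" "0 < e" "\<forall>t. \<bar>t\<bar> < e \<longrightarrow> \<gamma> t \<in> PD"
    "(\<gamma> has_vector_derivative v) (at 0)"
    by (rule tangent_spaceE)
  have "bounded_linear (\<lambda>x::real^'n. \<Sum>i\<in>UNIV. x $ i)"
    by (intro linear_conv_bounded_linear[THEN iffD1]) (auto simp: linear_iff sum.distrib sum_distrib_left)
  from bounded_linear.has_vector_derivative[OF this \<gamma>(4)]
  have "((\<lambda>t. 1::real) has_vector_derivative (\<Sum>i\<in>UNIV. v $ i)) (at 0)"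
    by (rule has_vector_derivative_transform_within_open[OF _ open_ball[of 0 e]])
      (use \<gamma>(2,3) in \<open>auto simp: dist_real_def PD_def\<close>)
  then have "(\<Sum>i\<in>UNIV. v $ i) = 0"
    using has_vector_derivative_const vector_derivative_unique_at by blast
  then show "v \<in> {v. (\<Sum>i\<in>UNIV. v $ i) = 0}" by simp
next
  fix v :: "real^'n" assume v: "v \<in> {v. (\<Sum>i\<in>UNIV. v $ i) = 0}"
  have p: "\<forall>i. 0 < p $ i" "(\<Sum>i\<in>UNIV. p $ i) = 1" using assms unfolding PD_def by auto
  define e where "e = Min (range (\<lambda>i. p $ i / (\<bar>v $ i\<bar> + 1)))"
  have "0 < e" unfolding e_def using p by (subst Min_gr_iff) (auto simp: add_nonneg_pos)
  have "p + t *\<^sub>R v \<in> PD" if t: "\<bar>t\<bar> < e" for t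
  proof -
    have "\<bar>t * v $ i\<bar> < p $ i" for i
    proof -
      have "e \<le> p $ i / (\<bar>v $ i\<bar> + 1)" unfolding e_def by (rule Min_le) auto
      then have "e * (\<bar>v $ i\<bar> + 1) \<le> p $ i" by (simp add: le_divide_eq add_nonneg_pos)
      moreover have "\<bar>t\<bar> * \<bar>v $ i\<bar> < e * (\<bar>v $ i\<bar> + 1)"
        using t \<open>0 < e\<close> by (smt (verit) abs_ge_zero mult_left_mono mult_strict_right_mono)
      ultimately show ?thesis by (simp add: abs_mult)
    qed
    then have "\<forall>i. 0 < p $ i + t * v $ i" by (smt (verit))
    moreover have "(\<Sum>i\<in>UNIV. p $ i + t * v $ i) = 1"
      using v p by (simp add: sum.distrib sum_distrib_left[symmetric])
    ultimately show ?thesis unfolding PD_def by simp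
  qed
  moreover have "((\<lambda>t. p + t *\<^sub>R v) has_vector_derivative v) (at 0)"
    by (auto intro!: derivative_eq_intros)
  ultimately show "v \<in> tangent_space PD p"
    using \<open>0 < e\<close> by (intro tangent_spaceI[of "\<lambda>t. p + t *\<^sub>R v" _ e]) auto
qed

lemma slice_chart_derivative_in_slice:
  fixes h :: "real^'n \<Rightarrow> 'b::euclidean_space"
  assumes "open U" "p \<in> U" "(h has_derivative Dh) (at p)"
    and "subspace S" "h ` (M \<inter> U) \<subseteq> S" and "v \<in> tangent_space M p"
  shows "Dh v \<in> S"
proof -
  obtain \<gamma> e where \<gamma>: "\<gamma> 0 = p" "0 < e" "\<forall>t. \<bar>t\<bar> < e \<longrightarrow> \<gamma> t \<in> M"
    "(\<gamma> has_vector_derivative v) (at 0)"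
    using assms(6) by (rule tangent_spaceE)
  have "((\<lambda>t. h (\<gamma> t)) has_derivative (\<lambda>t. Dh (t *\<^sub>R v))) (at 0)"
    using has_derivative_compose[OF \<gamma>(4)[unfolded has_vector_derivative_def]] assms(3) \<gamma>(1)
    by simp
  then have "((\<lambda>t. h (\<gamma> t)) has_vector_derivative Dh v) (at 0)"
    unfolding has_vector_derivative_def
    using linear_scale[OF has_derivative_linear[OF assms(3)]] by simp
  note quotient = has_vector_derivative_imp_difference_quotient[OF this]
  have "\<forall>\<^sub>F t in at 0. \<gamma> t \<in> U"
    using has_vector_derivative_continuous[OF \<gamma>(4)] assms(1,2) \<gamma>(1)
    by (simp add: continuous_within topological_tendstoD)
  moreover have "\<forall>\<^sub>F t in at (0::real). \<bar>t\<bar> < e"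
    unfolding eventually_at using \<gamma>(2) by (intro exI[of _ e]) (auto simp: dist_real_def)
  ultimately have "\<forall>\<^sub>F t in at 0. (h (\<gamma> t) - h (\<gamma> 0)) /\<^sub>R t \<in> S"
  proof eventually_elim
    case (elim t)
    then have "\<gamma> t \<in> M \<inter> U" "\<gamma> 0 \<in> M \<inter> U"
      using \<gamma>(1-3) assms(2) by auto
    then have "h (\<gamma> t) \<in> S" "h (\<gamma> 0) \<in> S"
      using assms(5) by blast+
    then show ?case using assms(4) by (simp add: subspace_diff subspace_scale)
  qed
  then show "Dh v \<in> S"
    using Lim_in_closed_set[OF closed_subspace[OF assms(4)] _ at_neq_bot quotient] by blast
qed

lemma slice_chart_inverse_derivative_in_tangent_space:
  fixes k :: "'b::real_normed_vector \<Rightarrow> real^'n"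
  assumes "open V" "h p \<in> V" "h p \<in> S" "subspace S" "S \<inter> V \<subseteq> h ` (M \<inter> U)"
    and "p \<in> U" "\<forall>x\<in>U. k (h x) = x" "(k has_derivative Dk) (at (h p))" and "w \<in> S"
  shows "Dk w \<in> tangent_space M p"
proof -
  obtain \<epsilon> where "0 < \<epsilon>" "ball (h p) \<epsilon> \<subseteq> V" using assms(1,2) open_contains_ball by blast
  define e where "e = \<epsilon> / (norm w + 1)"
  have "0 < e" unfolding e_def using \<open>0 < \<epsilon>\<close> by (simp add: add_nonneg_pos)
  have "k (h p + t *\<^sub>R w) \<in> M" if t: "\<bar>t\<bar> < e" for t
  proof -
    have "\<bar>t\<bar> * norm w \<le> \<bar>t\<bar> * (norm w + 1)" by (simp add: mult_left_mono)
    also have "\<dots> < \<epsilon>"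
      using t unfolding e_def by (simp add: pos_less_divide_eq add_nonneg_pos)
    finally have "\<bar>t\<bar> * norm w < \<epsilon>" .
    then have "h p + t *\<^sub>R w \<in> V" using \<open>ball (h p) \<epsilon> \<subseteq> V\<close> by (auto simp: dist_norm)
    moreover have "h p + t *\<^sub>R w \<in> S" using assms(3,4,9) by (simp add: subspace_add subspace_scale)
    ultimately obtain m where "m \<in> M \<inter> U" "h p + t *\<^sub>R w = h m" using assms(5) by blast
    then show ?thesis using assms(7) by simp
  qed
  moreover have "((\<lambda>t. k (h p + t *\<^sub>R w)) has_vector_derivative Dk w) (at 0)"
  proof -
    have "((\<lambda>t. h p + t *\<^sub>R w) has_derivative (\<lambda>t. t *\<^sub>R w)) (at 0)"
      by (auto intro!: derivative_eq_intros)
    from has_derivative_compose[OF this] assms(8)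
    have "((\<lambda>t. k (h p + t *\<^sub>R w)) has_derivative (\<lambda>t. Dk (t *\<^sub>R w))) (at 0)" by simp
    then show ?thesis
      unfolding has_vector_derivative_def
      using linear_scale[OF has_derivative_linear[OF assms(8)]] by simp
  qed
  ultimately show ?thesis
    using \<open>0 < e\<close> assms(6,7) by (intro tangent_spaceI[of "\<lambda>t. k (h p + t *\<^sub>R w)" _ e]) auto
qed

text \<open>In a slice chart \<open>h\<close> with inverse \<open>k\<close>, the tangent space is the image of the slice
  \<open>S\<close> under the (invertible) derivative of \<open>k\<close>.\<close>

lemma subspace_tangent_space:
  assumes "submanifold M" and "p \<in> M"
  shows "subspace (tangent_space M p)"
proof -
  obtain U V h k S where chart: "open U" "p \<in> U" "open V" "homeomorphism U V h k"
      "C1_on h U" "C1_on k V" "subspace S" "h ` (M \<inter> U) = S \<inter> V"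
    using assms unfolding submanifold_def by metis
  have k_h: "\<forall>x\<in>U. k (h x) = x" and "h ` U = V"
    using chart(4) unfolding homeomorphism_def by auto
  then have "h p \<in> V" "h p \<in> S" using chart(2,8) assms(2) by auto
  obtain Dh where Dh: "(h has_derivative Dh) (at p)"
    using chart(2,5) unfolding C1_on_def by blast
  obtain Dk where Dk: "(k has_derivative Dk) (at (h p))"
    using \<open>h p \<in> V\<close> chart(6) unfolding C1_on_def by blast
  have "((\<lambda>x. k (h x)) has_derivative (\<lambda>x. Dk (Dh x))) (at p)"
    using has_derivative_compose[OF Dh Dk] .
  moreover have "((\<lambda>x. k (h x)) has_derivative id) (at p)"
    by (rule has_derivative_transform_within_open[OF has_derivative_id chart(1,2)]) (simp add: k_h)
  ultimately have "(\<lambda>x. Dk (Dh x)) = id"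
    by (rule has_derivative_unique)
  then have Dk_Dh: "Dk (Dh v) = v" for v
    by (metis id_apply)
  have "tangent_space M p = Dk ` S"
  proof (intro set_eqI iffI)
    fix v assume "v \<in> tangent_space M p"
    then have "Dh v \<in> S"
      using slice_chart_derivative_in_slice[OF chart(1,2) Dh chart(7)] chart(8) by blast
    then show "v \<in> Dk ` S" using Dk_Dh by (metis image_eqI)
  next
    fix u assume "u \<in> Dk ` S"
    then show "u \<in> tangent_space M p"
      using slice_chart_inverse_derivative_in_tangent_space[OF chart(3) \<open>h p \<in> V\<close> \<open>h p \<in> S\<close> chart(7)
          _ chart(2) k_h Dk] chart(8) by blast
  qed
  then show ?thesis
    using linear_subspace_image[OF has_derivative_linear[OF Dk] chart(7)] by simp
qed

section \<open>Markov retractions of submanifolds\<close>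

lemma PD_pos: "p \<in> PD \<Longrightarrow> 0 < p $ i"
  unfolding PD_def by blast

lemma submanifold_subset_PD: "submanifold M \<Longrightarrow> M \<subseteq> PD"
  unfolding submanifold_def by blast

lemma markov_map_eq: "markov_map W = (\<lambda>x. W *v x)"
  unfolding markov_map_def ..

theorem cometric_pullback_markov_retraction:
  fixes M :: "(real^'n) set" and N :: "(real^'m) set" and W :: "real^'n^'m" and V :: "real^'m^'n"
  assumes "submanifold M" "submanifold N" "column_stochastic W" "column_stochastic V"
    and "markov_map W ` M \<subseteq> N" "markov_map V ` N \<subseteq> M"
    and "\<forall>x\<in>M. markov_map V (markov_map W x) = x"
    and "p \<in> M" "q \<in> N" "q = markov_map W p" "p = markov_map V q"
    and "\<alpha> \<in> cotangent_space M p" "\<beta> \<in> cotangent_space M p"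
  shows "cometric M p \<alpha> \<beta> = cometric N q (pullback V \<alpha>) (pullback V \<beta>)"
proof -
  have p: "\<forall>i. 0 < p $ i" and q: "\<forall>i. 0 < q $ i"
    using assms(1,2,8,9) submanifold_subset_PD PD_pos by blast+
  interpret fisher_retraction "tangent_space M p" "tangent_space N q" p q V W
  proof
    show "subspace (tangent_space M p)" "subspace (tangent_space N q)"
      using subspace_tangent_space assms(1,2,8,9) by blast+
    show "\<forall>i. 0 < p $ i" "\<forall>i. 0 < q $ i" using p q .
  next
    fix Y assume "Y \<in> tangent_space N q"
    then show "V *v Y \<in> tangent_space M p"
      using tangent_space_matrix_image assms(6,11) unfolding markov_map_eq by metis
    show "fisher p (V *v Y) (V *v Y) \<le> fisher q Y Y"
      using fisher_stochastic_contraction[OF assms(4) q] assms(11) unfolding markov_map_eq by simp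
  next
    fix X assume "X \<in> tangent_space M p"
    then show "W *v X \<in> tangent_space N q"
      using tangent_space_matrix_image assms(5,10) unfolding markov_map_eq by metis
    show "V *v (W *v X) = X"
      using tangent_space_left_inverse \<open>X \<in> _\<close> assms(7) unfolding markov_map_eq by blast
    show "fisher q (W *v X) (W *v X) \<le> fisher p X X"
      using fisher_stochastic_contraction[OF assms(3) p] assms(10) unfolding markov_map_eq by simp
  qed
  show ?thesis
    using fisher_sharp_pullback_isometric assms(12,13)
    unfolding cometric_eq_fisher_sharp pullback_def cotangent_space_eq by simp
qed

section \<open>Markov co-embeddings and Bayes inverses\<close>

lemma markov_left_inverse_matrix:
  fixes W :: "real^'n^'m" and V :: "real^'m^'n"
  assumes "\<forall>p\<in>PD. V *v (W *v p) = p"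
  shows "V ** W = mat 1"
proof -
  define u :: "real^'n" where "u = (\<chi> k. 1 / real CARD('n))"
  have "u \<in> PD" unfolding PD_def u_def by simp
  have "(V ** W) $ i' $ i = mat 1 $ i' $ i" for i i'
  proof -
    define r :: "real^'n" where "r = (1/2) *\<^sub>R (u + axis i 1)"
    have "0 < r $ k" for k
      using \<open>u \<in> PD\<close> unfolding r_def PD_def by (simp add: axis_def add_pos_nonneg)
    moreover have "(\<Sum>k\<in>UNIV. r $ k) = 1"
      using \<open>u \<in> PD\<close> unfolding r_def PD_def
      by (simp add: sum_divide_distrib[symmetric] sum.distrib axis_def)
    ultimately have "r \<in> PD" unfolding PD_def by blast
    have "axis i 1 = 2 *\<^sub>R r - u" unfolding r_def by (simp add: scaleR_add_right)
    then have "V *v (W *v axis i 1) = axis i 1"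
      using \<open>r \<in> PD\<close> \<open>u \<in> PD\<close> assms
      by (simp add: matrix_vector_mult_diff_distrib matrix_vector_mult_scaleR)
    then have "((V ** W) *v axis i 1) $ i' = axis i 1 $ i'"
      by (simp add: matrix_vector_mul_assoc)
    then show ?thesis unfolding matrix_vector_mult_basis column_def by (simp add: axis_def mat_def)
  qed
  then show ?thesis by (simp add: vec_eq_iff)
qed

text \<open>A Markov co-embedding is deterministic: since \<open>V W = 1\<close> with nonnegative entries, every
  input \<open>j\<close> (reached by \<open>W\<close> from some \<open>i\<close>) is sent by \<open>V\<close> to \<open>i\<close> only.\<close>

lemma markov_co_embedding_deterministic:
  fixes V :: "real^'m^'n"
  assumes "markov_co_embedding V" and "i \<noteq> i'"
  shows "V $ i $ j * V $ i' $ j = 0"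
proof -
  obtain W :: "real^'n^'m" where W: "surj_channel W" "\<forall>p\<in>PD. V *v (W *v p) = p"
    using assms(1) unfolding markov_co_embedding_def markov_map_eq by blast
  have nonneg: "\<forall>y x. 0 \<le> V $ y $ x" "\<forall>y x. 0 \<le> W $ y $ x"
    using assms(1) W(1) unfolding markov_co_embedding_def surj_channel_def by auto
  obtain i0 where "0 < W $ j $ i0" using W(1) unfolding surj_channel_def by blast
  have "V $ k $ j = 0" if "k \<noteq> i0" for k
  proof -
    have "(V ** W) $ k $ i0 = 0"
      using markov_left_inverse_matrix[OF W(2)] that by (simp add: mat_def)
    then have "(\<Sum>l\<in>UNIV. V $ k $ l * W $ l $ i0) = 0"
      by (simp add: matrix_matrix_mult_def)
    then have "V $ k $ j * W $ j $ i0 = 0"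
      using nonneg by (subst (asm) sum_nonneg_eq_0_iff) auto
    then show ?thesis using \<open>0 < W $ j $ i0\<close> by simp
  qed
  then show ?thesis using assms(2) by (cases "i = i0") auto
qed

definition bayes_inverse :: "real^'m^'n \<Rightarrow> real^'m \<Rightarrow> real^'n^'m" where
  "bayes_inverse V q = (\<chi> j i. q $ j * V $ i $ j / (V *v q) $ i)"

lemma surj_channel_matrix_vector_mult_pos:
  assumes "surj_channel V" and "\<forall>j. 0 < q $ j"
  shows "0 < (V *v q) $ i"
proof -
  obtain j where "0 < V $ i $ j" using assms(1) unfolding surj_channel_def by blast
  then show ?thesis
    using assms unfolding surj_channel_def matrix_vector_mult_def
    by (auto intro!: sum_pos2[of UNIV j] simp: less_imp_le)
qed

lemma column_stochastic_bayes_inverse: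
  assumes "surj_channel V" and "\<forall>j. 0 < q $ j"
  shows "column_stochastic (bayes_inverse V q)"
proof -
  have "(\<Sum>j\<in>UNIV. bayes_inverse V q $ j $ i) = 1" for i
  proof -
    have "(\<Sum>j\<in>UNIV. bayes_inverse V q $ j $ i) = (\<Sum>j\<in>UNIV. V $ i $ j * q $ j) / (V *v q) $ i"
      unfolding bayes_inverse_def by (simp add: sum_divide_distrib mult.commute)
    then show ?thesis
      using surj_channel_matrix_vector_mult_pos[OF assms, of i] by (simp add: matrix_vector_mult_def)
  qed
  moreover have "0 \<le> bayes_inverse V q $ j $ i" for i j
    using assms surj_channel_matrix_vector_mult_pos[OF assms, of i]
    unfolding bayes_inverse_def surj_channel_def by (simp add: less_imp_le)
  ultimately show ?thesis unfolding column_stochastic_def by blast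
qed

lemma bayes_inverse_recovers_prior:
  assumes "surj_channel V" and "\<forall>j. 0 < q $ j"
  shows "bayes_inverse V q *v (V *v q) = q"
proof -
  define r where "r = V *v q"
  have "r $ i \<noteq> 0" for i
    using surj_channel_matrix_vector_mult_pos[OF assms, of i] unfolding r_def by simp
  have "(bayes_inverse V q *v r) $ j = q $ j" for j
  proof -
    have "(bayes_inverse V q *v r) $ j = (\<Sum>i\<in>UNIV. bayes_inverse V q $ j $ i * r $ i)"
      by (simp add: matrix_vector_mult_def)
    also have "\<dots> = (\<Sum>i\<in>UNIV. q $ j * V $ i $ j)"
      unfolding bayes_inverse_def r_def[symmetric] using \<open>\<And>i. r $ i \<noteq> 0\<close> by simp
    also have "\<dots> = q $ j"
      using assms(1) unfolding surj_channel_def by (simp add: sum_distrib_left[symmetric])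
    finally show ?thesis .
  qed
  then show ?thesis unfolding r_def by (simp add: vec_eq_iff)
qed

lemma matrix_bayes_inverse_right_inverse:
  assumes "surj_channel V" and "\<forall>j. 0 < q $ j"
    and deterministic: "\<And>i i' j. i \<noteq> i' \<Longrightarrow> V $ i $ j * V $ i' $ j = 0"
  shows "V ** bayes_inverse V q = mat 1"
proof -
  have VV: "V $ i' $ j * V $ i $ j = (if i' = i then V $ i $ j else 0)" for i i' j
  proof -
    have "V $ i $ j = (\<Sum>k\<in>UNIV. V $ k $ j * V $ i $ j)"
      using assms(1) unfolding surj_channel_def by (simp add: sum_distrib_right[symmetric])
    also have "\<dots> = V $ i $ j * V $ i $ j + (\<Sum>k\<in>UNIV - {i}. V $ k $ j * V $ i $ j)"
      by (subst sum.remove[of _ i]) auto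
    also have "\<dots> = V $ i $ j * V $ i $ j"
      using deterministic by (simp add: sum.neutral)
    finally show ?thesis using deterministic by (cases "i' = i") simp_all
  qed
  have "(V ** bayes_inverse V q) $ i' $ i = (if i' = i then 1 else 0)" for i i'
  proof -
    have "(V ** bayes_inverse V q) $ i' $ i = (\<Sum>j\<in>UNIV. V $ i' $ j * V $ i $ j * q $ j) / (V *v q) $ i"
      unfolding bayes_inverse_def matrix_matrix_mult_def
      by (simp add: sum_divide_distrib ac_simps)
    also have "\<dots> = (if i' = i then 1 else 0)"
      using surj_channel_matrix_vector_mult_pos[OF assms(1,2), of i]
      by (simp add: VV if_distrib[of "\<lambda>x. x * _"] cong: if_cong) (simp add: matrix_vector_mult_def)
    finally show ?thesis .
  qed
  then show ?thesis by (simp add: vec_eq_iff mat_def)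
qed

lemma subspace_sum_zero: "subspace {v :: real^'n. (\<Sum>i\<in>UNIV. v $ i) = 0}"
  by (auto simp: subspace_def sum.distrib sum_distrib_left[symmetric])

theorem cometric_pullback_co_embedding:
  fixes V :: "real^'m^'n" and q :: "real^'m"
  assumes V: "markov_co_embedding V" and q: "q \<in> PD"
    and "\<alpha> \<in> cotangent_space PD (markov_map V q)" "\<beta> \<in> cotangent_space PD (markov_map V q)"
  shows "cometric PD (markov_map V q) \<alpha> \<beta> = cometric PD q (pullback V \<alpha>) (pullback V \<beta>)"
proof -
  have "surj_channel V" using V unfolding markov_co_embedding_def by blast
  have q_pos: "\<forall>j. 0 < q $ j" using q unfolding PD_def by blast
  define B where "B = bayes_inverse V q"
  have "column_stochastic V" "column_stochastic B"
    unfolding B_def using \<open>surj_channel V\<close> q_pos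
    by (simp_all add: surj_channel_column_stochastic column_stochastic_bayes_inverse)
  have Vq_pos: "\<forall>i. 0 < (V *v q) $ i"
    using surj_channel_matrix_vector_mult_pos[OF \<open>surj_channel V\<close> q_pos] by blast
  have "V *v q \<in> PD"
    using Vq_pos q sum_stochastic_matrix_vector_mult[OF \<open>column_stochastic V\<close>]
    unfolding PD_def by simp
  interpret fisher_retraction "tangent_space PD (V *v q)" "tangent_space PD q" "V *v q" q V B
  proof
    show "subspace (tangent_space PD (V *v q))" "subspace (tangent_space PD q)"
      unfolding tangent_space_PD[OF \<open>V *v q \<in> PD\<close>] tangent_space_PD[OF q] by (fact subspace_sum_zero)+
    show "\<forall>i. 0 < (V *v q) $ i" "\<forall>i. 0 < q $ i" using Vq_pos q_pos .
  next
    fix Y assume "Y \<in> tangent_space PD q"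
    then show "V *v Y \<in> tangent_space PD (V *v q)"
      unfolding tangent_space_PD[OF \<open>V *v q \<in> PD\<close>] tangent_space_PD[OF q]
      using sum_stochastic_matrix_vector_mult[OF \<open>column_stochastic V\<close>] by simp
    show "fisher (V *v q) (V *v Y) (V *v Y) \<le> fisher q Y Y"
      using fisher_stochastic_contraction[OF \<open>column_stochastic V\<close> q_pos] .
  next
    fix X assume "X \<in> tangent_space PD (V *v q)"
    then show "B *v X \<in> tangent_space PD q"
      unfolding tangent_space_PD[OF \<open>V *v q \<in> PD\<close>] tangent_space_PD[OF q]
      using sum_stochastic_matrix_vector_mult[OF \<open>column_stochastic B\<close>] by simp
    show "V *v (B *v X) = X"
      using matrix_bayes_inverse_right_inverse[OF \<open>surj_channel V\<close> q_pos
          markov_co_embedding_deterministic[OF V]]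
      unfolding B_def by (simp add: matrix_vector_mul_assoc)
    show "fisher q (B *v X) (B *v X) \<le> fisher (V *v q) X X"
      using fisher_stochastic_contraction[OF \<open>column_stochastic B\<close> Vq_pos]
        bayes_inverse_recovers_prior[OF \<open>surj_channel V\<close> q_pos]
      unfolding B_def by simp
  qed
  show ?thesis
    using fisher_sharp_pullback_isometric assms(3,4)
    unfolding cometric_eq_fisher_sharp pullback_def cotangent_space_eq markov_map_eq by simp
qed

theorem mainTheorem7:
  shows "(\<forall>(M :: (real^'n) set) (N :: (real^'m) set) (W :: real^'n^'m) (V :: real^'m^'n) p q.
            submanifold M \<and> submanifold N \<and> surj_channel W \<and> surj_channel V \<and>
            markov_map W ` M \<subseteq> N \<and> markov_map V ` N \<subseteq> M \<and>
            (\<forall>x\<in>M. markov_map V (markov_map W x) = x) \<and>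
            p \<in> M \<and> q \<in> N \<and> q = markov_map W p \<and> p = markov_map V q \<longrightarrow>
            (\<forall>\<alpha>\<in>cotangent_space M p. \<forall>\<beta>\<in>cotangent_space M p.
               cometric M p \<alpha> \<beta> = cometric N q (pullback V \<alpha>) (pullback V \<beta>)))
       \<and> (\<forall>(V :: real^'m^'n) (q :: real^'m) \<alpha> \<beta>.
            markov_co_embedding V \<and> q \<in> PD \<and>
            \<alpha> \<in> cotangent_space PD (markov_map V q) \<and> \<beta> \<in> cotangent_space PD (markov_map V q) \<longrightarrow>
            cometric PD (markov_map V q) \<alpha> \<beta> = cometric PD q (pullback V \<alpha>) (pullback V \<beta>))"
  by (intro conjI allI impI ballI; elim conjE)
    (assumption | rule cometric_pullback_markov_retraction cometric_pullback_co_embedding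
      surj_channel_column_stochastic)+

end
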